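(* Let $\varphi:\mathbb{M}(n)\to\mathbb{C}$ be a positive unital linear functional and let $A\in\mathbb{M}(n)$ be Hermitian. Put $B=A-\varphi(A)I$. Then $$\varphi(B^4)\le\frac{\operatorname{spd}(A)^4}{12}$$ and $$\varphi(B^2)\varphi(B^4)-\varphi(B^2)^3-\varphi(B^3)^2\le\frac{\operatorname{spd}(A)^6}{432}.$$
   Context: $\mathbb{M}(n)$ is the algebra of $n\times n$ complex matrices. A linear functional $\varphi$ on $\mathbb{M}(n)$ is positive if $\varphi(A)\ge0$ whenever $A$ is positive semidefinite, and unital if $\varphi(I)=1$. For $A$ with eigenvalues $\lambda_1,\dots,\lambda_n$, the spread is $\operatorname{spd}(A)=\max_{i,j}|\lambda_i-\lambda_j|$. *)

theory Defs
  imports "Jordan_Normal_Form.Spectral_Radius" "HOL-Library.Complex_Order"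
begin

definition hermitian_mat :: "nat \<Rightarrow> complex mat \<Rightarrow> bool" where
  "hermitian_mat n A \<longleftrightarrow> A \<in> carrier_mat n n \<and>
     (\<forall>i<n. \<forall>j<n. A $$ (i, j) = cnj (A $$ (j, i)))"

definition psd_mat :: "nat \<Rightarrow> complex mat \<Rightarrow> bool" where
  "psd_mat n A \<longleftrightarrow> hermitian_mat n A \<and>
     (\<forall>v \<in> carrier_vec n. 0 \<le> (\<Sum>i<n. cnj (v $ i) * (A *\<^sub>v v) $ i))"

definition pos_unital_functional :: "nat \<Rightarrow> (complex mat \<Rightarrow> complex) \<Rightarrow> bool" where
  "pos_unital_functional n \<phi> \<longleftrightarrow>
     (\<forall>X \<in> carrier_mat n n. \<forall>Y \<in> carrier_mat n n. \<phi> (X + Y) = \<phi> X + \<phi> Y) \<and>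
     (\<forall>c. \<forall>X \<in> carrier_mat n n. \<phi> (c \<cdot>\<^sub>m X) = c * \<phi> X) \<and>
     (\<forall>X. psd_mat n X \<longrightarrow> 0 \<le> \<phi> X) \<and>
     \<phi> (1\<^sub>m n) = 1"

definition spd :: "complex mat \<Rightarrow> real" where
  "spd A = Max {cmod (l - m) | l m. eigenvalue A l \<and> eigenvalue A m}"

end

theory Submission
  imports Defs
begin

text \<open>Let the spectrum of \<open>A\<close> lie in \<open>[c - h, c + h]\<close> with \<open>2 h \<le> spd A\<close>. Since a Hermitian
matrix is dominated by its largest eigenvalue (shown here through the boundedness of the powers
of a matrix of spectral radius below \<open>1\<close>), \<open>h\<^sup>2 - (A - c)\<^sup>2\<close> is positive semidefinite.
Evaluating \<open>\<phi>\<close> at real polynomials in \<open>A\<close> gives a positive linear functional on real polynomials;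
sandwiching \<open>h\<^sup>2 - (A - c)\<^sup>2\<close> between \<open>1\<close>, \<open>A - c\<close> and \<open>A - c - 2 s\<close> (with \<open>s = \<phi>(A) - c\<close>)
yields three inequalities between the central moments of \<open>\<phi>\<close>, from which both bounds follow
by elementary real algebra.\<close>

section \<open>Hermitian matrices and their quadratic forms\<close>

lemma hermitian_mat_carrier: "hermitian_mat n X \<Longrightarrow> X \<in> carrier_mat n n"
  unfolding hermitian_mat_def by blast

lemma hermitian_matD: "hermitian_mat n X \<Longrightarrow> i < n \<Longrightarrow> j < n \<Longrightarrow> cnj (X $$ (i, j)) = X $$ (j, i)"
  unfolding hermitian_mat_def by metis

lemma hermitian_matI:
  "X \<in> carrier_mat n n \<Longrightarrow> (\<And>i j. i < n \<Longrightarrow> j < n \<Longrightarrow> cnj (X $$ (i, j)) = X $$ (j, i))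
   \<Longrightarrow> hermitian_mat n X"
  unfolding hermitian_mat_def by metis

lemma hermitian_mat_add:
  assumes "hermitian_mat n X" "hermitian_mat n Y" shows "hermitian_mat n (X + Y)"
  using assms hermitian_mat_carrier[OF assms(1)] hermitian_mat_carrier[OF assms(2)]
  by (intro hermitian_matI) (auto simp: hermitian_matD)

lemma hermitian_mat_smult:
  assumes "hermitian_mat n X" shows "hermitian_mat n (complex_of_real a \<cdot>\<^sub>m X)"
  using assms hermitian_mat_carrier[OF assms] by (intro hermitian_matI) (auto simp: hermitian_matD)

lemma hermitian_mat_one: "hermitian_mat n (1\<^sub>m n)"
  by (rule hermitian_matI) auto

lemma hermitian_mat_mult_commute:
  assumes hX: "hermitian_mat n X" and hY: "hermitian_mat n Y" and comm: "X * Y = Y * X"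
  shows "hermitian_mat n (X * Y)"
proof (rule hermitian_matI)
  have X: "X \<in> carrier_mat n n" and Y: "Y \<in> carrier_mat n n"
    using hX hY by (auto simp: hermitian_mat_carrier)
  then show "X * Y \<in> carrier_mat n n" by simp
  fix i j assume i: "i < n" and j: "j < n"
  have "cnj ((X * Y) $$ (i, j)) = (\<Sum>k<n. cnj (X $$ (i, k)) * cnj (Y $$ (k, j)))"
    using X Y i j by (simp add: scalar_prod_def lessThan_atLeast0)
  also have "\<dots> = (\<Sum>k<n. Y $$ (j, k) * X $$ (k, i))"
    using i j by (intro sum.cong) (auto simp: hermitian_matD[OF hX] hermitian_matD[OF hY])
  also have "\<dots> = (Y * X) $$ (j, i)"
    using X Y i j by (simp add: scalar_prod_def lessThan_atLeast0)
  finally show "cnj ((X * Y) $$ (i, j)) = (X * Y) $$ (j, i)" using comm by simp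
qed

lemma hermitian_mat_cscalar_prod_swap:
  assumes hX: "hermitian_mat n X" and u: "u \<in> carrier_vec n" and v: "v \<in> carrier_vec n"
  shows "(X *\<^sub>v u) \<bullet>c v = u \<bullet>c (X *\<^sub>v v)"
proof -
  have X: "X \<in> carrier_mat n n" using hX by (rule hermitian_mat_carrier)
  have "(X *\<^sub>v u) \<bullet>c v = (\<Sum>i<n. \<Sum>j<n. X $$ (i, j) * u $ j * cnj (v $ i))"
    using X u v by (simp add: scalar_prod_def lessThan_atLeast0 sum_distrib_right)
  also have "\<dots> = (\<Sum>j<n. \<Sum>i<n. u $ j * cnj (X $$ (j, i) * v $ i))"
    by (subst sum.swap) (auto intro!: sum.cong simp: hermitian_matD[OF hX])
  also have "\<dots> = u \<bullet>c (X *\<^sub>v v)"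
    using X u v by (simp add: scalar_prod_def lessThan_atLeast0 sum_distrib_left sum_conjugate)
  finally show ?thesis .
qed

lemma cscalar_prod_self_real: "v \<bullet>c v = complex_of_real (Re (v \<bullet>c v))" "0 \<le> Re (v \<bullet>c v)"
  using conjugate_square_ge_0_vec[of v] by (auto simp: less_eq_complex_def complex_eq_iff)

lemma cscalar_prod_diff_real_smult:
  fixes x v :: "complex vec"
  assumes "x \<in> carrier_vec n" "v \<in> carrier_vec n"
  shows "(x - complex_of_real k \<cdot>\<^sub>v v) \<bullet>c (x - complex_of_real k \<cdot>\<^sub>v v)
    = x \<bullet>c x - of_real k * (v \<bullet>c x + x \<bullet>c v) + of_real (k\<^sup>2) * (v \<bullet>c v)"
  using assms by (simp add: scalar_prod_def sum_subtractf sum.distrib algebra_simps sum_distrib_left power2_eq_square)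

lemma eigenvalue_hermitian_real:
  assumes hA: "hermitian_mat n A" and e: "eigenvalue A l" shows "Im l = 0"
proof -
  have A: "A \<in> carrier_mat n n" using hA by (rule hermitian_mat_carrier)
  from e obtain v where v: "v \<in> carrier_vec n" "v \<noteq> 0\<^sub>v n" "A *\<^sub>v v = l \<cdot>\<^sub>v v"
    unfolding eigenvalue_def eigenvector_def using A by auto
  have "l * (v \<bullet>c v) = cnj l * (v \<bullet>c v)"
    using hermitian_mat_cscalar_prod_swap[OF hA v(1) v(1)] v(1)
    by (simp add: v(3) conjugate_smult_vec)
  moreover have "v \<bullet>c v \<noteq> 0" using v by simp
  ultimately have "l = cnj l" by simp
  then show ?thesis by (metis cnj.sel(2) equal_neg_zero)
qed

lemma hermitian_quadratic_form_real:
  assumes "hermitian_mat n X" "v \<in> carrier_vec n"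
  shows "(X *\<^sub>v v) \<bullet>c v = complex_of_real (Re ((X *\<^sub>v v) \<bullet>c v))"
proof -
  have "(X *\<^sub>v v) \<bullet>c v = cnj ((X *\<^sub>v v) \<bullet>c v)"
    using hermitian_mat_cscalar_prod_swap[OF assms assms(2)] hermitian_mat_carrier[OF assms(1)] assms(2)
      conjugate_vec_sprod_comm[of v n "X *\<^sub>v v"]
    by (metis conjugate_complex_def conjugate_conjugate_sprod mult_mat_vec_carrier)
  then show ?thesis by (metis Reals_cnj_iff of_real_Re)
qed

lemma hermitian_cauchy_schwarz:
  assumes hW: "hermitian_mat n W" and v: "v \<in> carrier_vec n"
  shows "(Re ((W *\<^sub>v v) \<bullet>c v))\<^sup>2 \<le> Re (v \<bullet>c v) * Re (((W * W) *\<^sub>v v) \<bullet>c v)"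
proof -
  have W: "W \<in> carrier_mat n n" using hW by (rule hermitian_mat_carrier)
  define a where "a = Re ((W *\<^sub>v v) \<bullet>c v)"
  define N where "N = Re (v \<bullet>c v)"
  define Q where "Q = Re (((W * W) *\<^sub>v v) \<bullet>c v)"
  have Wv: "W *\<^sub>v v \<in> carrier_vec n" using W v by simp
  have WW: "(W *\<^sub>v v) \<bullet>c (W *\<^sub>v v) = ((W * W) *\<^sub>v v) \<bullet>c v"
    using hermitian_mat_cscalar_prod_swap[OF hW Wv v] W v by simp
  have sym: "v \<bullet>c (W *\<^sub>v v) = (W *\<^sub>v v) \<bullet>c v"
    using hermitian_mat_cscalar_prod_swap[OF hW v v] by simp
  have quadratic: "0 \<le> Q - 2 * k * a + k\<^sup>2 * N" for k :: real
  proof -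
    let ?w = "W *\<^sub>v v - complex_of_real k \<cdot>\<^sub>v v"
    have "Re (?w \<bullet>c ?w) = Q - 2 * k * a + k\<^sup>2 * N"
      unfolding cscalar_prod_diff_real_smult[OF Wv v] WW sym Q_def a_def N_def by simp
    then show ?thesis using cscalar_prod_self_real(2)[of ?w] by simp
  qed
  have "a\<^sup>2 \<le> N * Q"
  proof (cases "N = 0")
    case True
    have "a = 0"
    proof (rule ccontr)
      assume "a \<noteq> 0"
      then have "Q - 2 * ((Q + 1) / (2 * a)) * a + ((Q + 1) / (2 * a))\<^sup>2 * N = -1"
        using True by (simp add: field_simps)
      then show False using quadratic[of "(Q + 1) / (2 * a)"] by simp
    qed
    then show ?thesis using True by simp
  next
    case False
    then have N: "N > 0" using cscalar_prod_self_real(2)[of v] unfolding N_def by simp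
    have "0 \<le> Q - 2 * (a / N) * a + (a / N)\<^sup>2 * N" by (rule quadratic)
    also have "\<dots> = (N * Q - a\<^sup>2) / N" using N by (simp add: field_simps power2_eq_square)
    finally show ?thesis using N by (simp add: zero_le_divide_iff)
  qed
  then show ?thesis unfolding a_def N_def Q_def .
qed

section \<open>Real polynomials evaluated at a matrix\<close>

definition poly_mat :: "complex mat \<Rightarrow> real poly \<Rightarrow> complex mat" where
  "poly_mat A p = foldr (\<lambda>a M. complex_of_real a \<cdot>\<^sub>m 1\<^sub>m (dim_row A) + A * M) (coeffs p) (0\<^sub>m (dim_row A) (dim_row A))"

context
  fixes A :: "complex mat" and n :: nat
  assumes A: "A \<in> carrier_mat n n"
begin

lemma poly_mat_0 [simp]: "poly_mat A 0 = 0\<^sub>m n n"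
  using A by (simp add: poly_mat_def)

lemma poly_mat_pCons: "poly_mat A (pCons a p) = complex_of_real a \<cdot>\<^sub>m 1\<^sub>m n + A * poly_mat A p"
proof (cases "a = 0 \<and> p = 0")
  case True
  then show ?thesis using A by (intro eq_matI) auto
next
  case False
  then have "coeffs (pCons a p) = a # coeffs p" by (auto simp: cCons_def)
  then show ?thesis using A by (simp add: poly_mat_def)
qed

lemma poly_mat_carrier [simp]: "poly_mat A p \<in> carrier_mat n n"
  by (induct p) (use A in \<open>auto simp: poly_mat_pCons\<close>)

lemma poly_mat_dim [simp]: "dim_row (poly_mat A p) = n" "dim_col (poly_mat A p) = n"
  using poly_mat_carrier[of p] by (auto simp del: poly_mat_carrier)

lemma poly_mat_pCons_0: "poly_mat A (pCons 0 p) = A * poly_mat A p"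
  using A by (intro eq_matI) (auto simp: poly_mat_pCons)

lemma poly_mat_add: "poly_mat A (p + q) = poly_mat A p + poly_mat A q"
proof (induct p arbitrary: q)
  case 0 then show ?case by simp
next
  case (pCons a p q)
  obtain b q' where q: "q = pCons b q'" by (cases q)
  have "poly_mat A (pCons a p + q)
      = complex_of_real (a + b) \<cdot>\<^sub>m 1\<^sub>m n + (A * poly_mat A p + A * poly_mat A q')"
    using pCons(2) A by (simp add: q poly_mat_pCons mult_add_distrib_mat[OF A poly_mat_carrier poly_mat_carrier])
  also have "\<dots> = poly_mat A (pCons a p) + poly_mat A q"
    using A by (intro eq_matI) (auto simp: q poly_mat_pCons ring_distribs)
  finally show ?case .
qed

lemma poly_mat_smult: "poly_mat A (Polynomial.smult c p) = complex_of_real c \<cdot>\<^sub>m poly_mat A p"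
proof (induct p)
  case 0 then show ?case by simp
next
  case (pCons a p)
  have "poly_mat A (Polynomial.smult c (pCons a p))
      = complex_of_real (c * a) \<cdot>\<^sub>m 1\<^sub>m n + complex_of_real c \<cdot>\<^sub>m (A * poly_mat A p)"
    using pCons(2) by (simp add: poly_mat_pCons mult_smult_distrib[OF A poly_mat_carrier])
  also have "\<dots> = complex_of_real c \<cdot>\<^sub>m poly_mat A (pCons a p)"
    using A by (intro eq_matI) (auto simp: poly_mat_pCons ring_distribs mult_smult_distrib[OF A poly_mat_carrier])
  finally show ?case .
qed

lemma poly_mat_const: "poly_mat A [:a:] = complex_of_real a \<cdot>\<^sub>m 1\<^sub>m n"
  using A by (intro eq_matI) (auto simp: poly_mat_pCons)

lemma poly_mat_one: "poly_mat A 1 = 1\<^sub>m n"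
  using poly_mat_const[of 1] by (intro eq_matI) (auto simp: one_pCons)

lemma poly_mat_X: "poly_mat A [:0, 1:] = A"
  using A by (intro eq_matI) (auto simp: poly_mat_pCons poly_mat_const)

lemma poly_mat_mult: "poly_mat A (p * q) = poly_mat A p * poly_mat A q"
proof (induct p)
  case 0 then show ?case by (simp add: left_mult_zero_mat[OF poly_mat_carrier])
next
  case (pCons a p)
  have "poly_mat A (pCons a p * q)
      = complex_of_real a \<cdot>\<^sub>m poly_mat A q + A * (poly_mat A p * poly_mat A q)"
    using pCons(2) by (simp add: poly_mat_add poly_mat_smult poly_mat_pCons_0)
  also have "\<dots> = (complex_of_real a \<cdot>\<^sub>m 1\<^sub>m n + A * poly_mat A p) * poly_mat A q"
    using A by (simp add: add_mult_distrib_mat[of _ n n _ _ n] mult_smult_assoc_mat[OF one_carrier_mat poly_mat_carrier]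
        assoc_mult_mat[OF A poly_mat_carrier poly_mat_carrier])
  finally show ?case by (simp add: poly_mat_pCons)
qed

lemma poly_mat_diff: "poly_mat A (p - q) = poly_mat A p - poly_mat A q"
proof -
  have "poly_mat A (p - q) = poly_mat A p + complex_of_real (-1) \<cdot>\<^sub>m poly_mat A q"
    by (simp only: diff_conv_add_uminus poly_mat_add poly_mat_smult[symmetric]) simp
  also have "\<dots> = poly_mat A p - poly_mat A q" using A by (intro eq_matI) auto
  finally show ?thesis .
qed

lemma poly_mat_power: "poly_mat A (p ^ k) = poly_mat A p ^\<^sub>m k"
proof (induct k)
  case (Suc k)
  have "poly_mat A (p ^ Suc k) = poly_mat A (p ^ k * p)" by (simp add: mult.commute)
  then show ?case by (simp only: poly_mat_mult Suc pow_mat.simps)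
qed (simp add: poly_mat_one)

lemma poly_mat_commute: "poly_mat A p * poly_mat A q = poly_mat A q * poly_mat A p"
  by (simp add: poly_mat_mult[symmetric] mult.commute)

end

lemma hermitian_poly_mat:
  assumes hA: "hermitian_mat n A" shows "hermitian_mat n (poly_mat A p)"
proof -
  have A: "A \<in> carrier_mat n n" using hA by (rule hermitian_mat_carrier)
  show ?thesis
  proof (induct p)
    case 0
    show ?case using A by (auto intro: hermitian_matI)
  next
    case (pCons a p)
    have "A * poly_mat A p = poly_mat A p * A"
      using poly_mat_commute[OF A, of "[:0, 1:]" p] by (simp add: poly_mat_X[OF A])
    then have "hermitian_mat n (A * poly_mat A p)"
      by (rule hermitian_mat_mult_commute[OF hA pCons(2)])
    then show ?case unfolding poly_mat_pCons[OF A]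
      using hermitian_mat_add hermitian_mat_smult[OF hermitian_mat_one] by blast
  qed
qed

section \<open>Quadratic forms bounded by eigenvalues\<close>

lemma smult_mat_mult_mat_vec:
  assumes "M \<in> carrier_mat n n" "v \<in> carrier_vec n"
  shows "(k \<cdot>\<^sub>m M) *\<^sub>v v = k \<cdot>\<^sub>v (M *\<^sub>v v)"
  using assms by (intro eq_vecI) (auto simp: scalar_prod_def sum_distrib_left mult.assoc)

lemma quadratic_form_le_norm_bound:
  assumes M: "M \<in> carrier_mat n n" and bound: "norm_bound M c" and v: "v \<in> carrier_vec n"
  shows "Re ((M *\<^sub>v v) \<bullet>c v) \<le> c * (\<Sum>i<n. cmod (v $ i))\<^sup>2"
proof -
  let ?S = "\<Sum>i<n. cmod (v $ i)"
  have entry: "cmod ((M *\<^sub>v v) $ i) \<le> c * ?S" if i: "i < n" for i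
  proof -
    have "cmod ((M *\<^sub>v v) $ i) \<le> (\<Sum>j<n. cmod (M $$ (i, j)) * cmod (v $ j))"
      using M v i by (simp add: scalar_prod_def lessThan_atLeast0 norm_mult[symmetric] norm_sum)
    also have "\<dots> \<le> (\<Sum>j<n. c * cmod (v $ j))"
      using bound M i by (intro sum_mono mult_right_mono) (auto simp: norm_bound_def)
    finally show ?thesis by (simp add: sum_distrib_left)
  qed
  have "Re ((M *\<^sub>v v) \<bullet>c v) \<le> cmod ((M *\<^sub>v v) \<bullet>c v)" by (rule complex_Re_le_cmod)
  also have "\<dots> = cmod (\<Sum>i<n. (M *\<^sub>v v) $ i * cnj (v $ i))"
    using M v by (simp add: scalar_prod_def lessThan_atLeast0 del: index_mult_mat_vec)
  also have "\<dots> \<le> (\<Sum>i<n. cmod ((M *\<^sub>v v) $ i) * cmod (v $ i))"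
    by (rule order_trans[OF norm_sum]) (simp add: norm_mult)
  also have "\<dots> \<le> (\<Sum>i<n. c * ?S * cmod (v $ i))"
    by (intro sum_mono mult_right_mono entry) auto
  also have "\<dots> = c * ?S\<^sup>2"
    by (simp add: sum_distrib_left[symmetric] power2_eq_square)
  finally show ?thesis .
qed

lemma le_one_of_bounded_square_le_double:
  fixes b :: "nat \<Rightarrow> real"
  assumes square: "\<And>j. (b j)\<^sup>2 \<le> b (2 * j)" and bounded: "\<And>j. b j \<le> K"
  shows "b 1 \<le> 1"
proof (rule ccontr)
  assume "\<not> b 1 \<le> 1"
  then have gt1: "1 < b 1" by simp
  have iterate: "b 1 ^ 2 ^ k \<le> b (2 ^ k)" for k
  proof (induct k)
    case (Suc k)
    have "b 1 ^ 2 ^ Suc k = (b 1 ^ 2 ^ k)\<^sup>2" by (simp add: power_mult[symmetric] mult.commute)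
    also have "\<dots> \<le> (b (2 ^ k))\<^sup>2" using Suc gt1 by (intro power_mono) auto
    also have "\<dots> \<le> b (2 ^ Suc k)" using square by simp
    finally show ?case .
  qed simp
  obtain k where "K < b 1 ^ k" using real_arch_pow[OF gt1] by blast
  also have "\<dots> \<le> b 1 ^ 2 ^ k" using gt1 by (intro power_increasing) (auto intro: less_imp_le less_exp)
  also have "\<dots> \<le> K" using iterate bounded order_trans by blast
  finally show False by simp
qed

text \<open>With \<open>b j = \<langle>Y\<^sup>j v, v\<rangle> / \<langle>v, v\<rangle>\<close>, Cauchy-Schwarz gives \<open>(b j)\<^sup>2 \<le> b (2 j)\<close>, and bounded
  powers of \<open>Y\<close> keep \<open>b\<close> bounded.\<close>

lemma hermitian_quadratic_form_le_of_bounded_powers: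
  assumes hY: "hermitian_mat n Y" and bounded: "\<And>k. norm_bound (Y ^\<^sub>m k) c" and v: "v \<in> carrier_vec n"
  shows "Re ((Y *\<^sub>v v) \<bullet>c v) \<le> Re (v \<bullet>c v)"
proof (cases "v = 0\<^sub>v n")
  case True
  then show ?thesis using hermitian_mat_carrier[OF hY] by simp
next
  case False
  have Y: "Y \<in> carrier_mat n n" using hY by (rule hermitian_mat_carrier)
  define N where "N = Re (v \<bullet>c v)"
  have N: "N > 0" using False v cscalar_prod_self_real[of v] conjugate_square_eq_0_vec[OF v]
    unfolding N_def by (metis less_eq_real_def of_real_0)
  define b where "b j = Re ((Y ^\<^sub>m j *\<^sub>v v) \<bullet>c v) / N" for j
  have power: "Y ^\<^sub>m j = poly_mat Y ([:0, 1:] ^ j)" for j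
    by (simp add: poly_mat_power[OF Y] poly_mat_X[OF Y])
  have "(b j)\<^sup>2 \<le> b (2 * j)" for j
  proof -
    have "Y ^\<^sub>m j * Y ^\<^sub>m j = Y ^\<^sub>m (2 * j)"
      unfolding power poly_mat_mult[OF Y, symmetric] by (simp add: power_add[symmetric] mult_2)
    then have "(Re ((Y ^\<^sub>m j *\<^sub>v v) \<bullet>c v))\<^sup>2 \<le> N * Re ((Y ^\<^sub>m (2 * j) *\<^sub>v v) \<bullet>c v)"
      using hermitian_cauchy_schwarz[OF _ v, of "Y ^\<^sub>m j"] hermitian_poly_mat[OF hY] power
      unfolding N_def by metis
    then show ?thesis using N by (simp add: b_def divide_le_cancel power2_eq_square field_simps)
  qed
  moreover have "b j \<le> c * (\<Sum>i<n. cmod (v $ i))\<^sup>2 / N" for j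
    unfolding b_def using quadratic_form_le_norm_bound[OF _ bounded v] Y N by (simp add: divide_right_mono)
  ultimately have "b 1 \<le> 1" by (rule le_one_of_bounded_square_le_double)
  then show ?thesis using N Y by (simp add: b_def N_def)
qed

lemma eigenvalue_smult_mat:
  fixes M :: "'a :: field mat"
  assumes M: "M \<in> carrier_mat n n" and k: "k \<noteq> 0" and e: "eigenvalue (k \<cdot>\<^sub>m M) \<mu>"
  shows "eigenvalue M (\<mu> / k)"
proof -
  from e obtain w where w: "w \<in> carrier_vec n" "w \<noteq> 0\<^sub>v n" "(k \<cdot>\<^sub>m M) *\<^sub>v w = \<mu> \<cdot>\<^sub>v w"
    unfolding eigenvalue_def eigenvector_def using M by auto
  have "1 / k * k = 1" using k by simp
  then have "M *\<^sub>v w = (1 / k) \<cdot>\<^sub>v ((k \<cdot>\<^sub>m M) *\<^sub>v w)"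
    by (simp add: smult_smult_assoc smult_mat_mult_mat_vec[OF M w(1)])
  also have "\<dots> = (\<mu> / k) \<cdot>\<^sub>v w" by (simp add: w(3) smult_smult_assoc)
  finally have "M *\<^sub>v w = (\<mu> / k) \<cdot>\<^sub>v w" .
  then show ?thesis using w M unfolding eigenvalue_def eigenvector_def by auto
qed

lemma hermitian_quadratic_form_le_of_eigenvalues_less_1:
  assumes hY: "hermitian_mat n Y" and n: "0 < n"
    and small: "\<And>\<mu>. eigenvalue Y \<mu> \<Longrightarrow> cmod \<mu> < 1" and v: "v \<in> carrier_vec n"
  shows "Re ((Y *\<^sub>v v) \<bullet>c v) \<le> Re (v \<bullet>c v)"
proof -
  have Y: "Y \<in> carrier_mat n n" using hY by (rule hermitian_mat_carrier)
  obtain \<mu> where "\<mu> \<in> spectrum Y" "spectral_radius Y = cmod \<mu>"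
    using spectral_radius_mem_max(1)[OF Y n] by blast
  then have "spectral_radius Y < 1" using small unfolding spectrum_def by simp
  then obtain c where "\<And>k. norm_bound (Y ^\<^sub>m k) c"
    using spectral_radius_jnf_norm_bound_less_1_upper_triangular[OF Y] by blast
  then show ?thesis by (rule hermitian_quadratic_form_le_of_bounded_powers[OF hY _ v])
qed

lemma hermitian_quadratic_form_le_eigenvalue_bound:
  assumes hZ: "hermitian_mat n Z" and n: "0 < n"
    and eigen_bound: "\<And>\<mu>. eigenvalue Z \<mu> \<Longrightarrow> cmod \<mu> \<le> h" and v: "v \<in> carrier_vec n"
  shows "Re ((Z *\<^sub>v v) \<bullet>c v) \<le> h * Re (v \<bullet>c v)"
proof -
  have Z: "Z \<in> carrier_mat n n" using hZ by (rule hermitian_mat_carrier)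
  define q where "q = Re ((Z *\<^sub>v v) \<bullet>c v)"
  define N where "N = Re (v \<bullet>c v)"
  have N: "0 \<le> N" unfolding N_def by (rule cscalar_prod_self_real)
  obtain \<mu>0 where "eigenvalue Z \<mu>0" using spectrum_non_empty[OF Z n] unfolding spectrum_def by auto
  then have h: "0 \<le> h" using eigen_bound[of \<mu>0] norm_ge_zero order_trans by blast
  have scaled: "q \<le> r * N" if r: "h < r" for r
  proof -
    have r0: "0 < r" using r h by simp
    define Y where "Y = complex_of_real (1 / r) \<cdot>\<^sub>m Z"
    have small: "cmod \<mu> < 1" if "eigenvalue Y \<mu>" for \<mu>
    proof -
      have "eigenvalue Z (\<mu> * of_real r)"
        using eigenvalue_smult_mat[OF Z _ that[unfolded Y_def]] r0 by simp
      then have "cmod (\<mu> * of_real r) \<le> h" by (rule eigen_bound)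
      then have "cmod \<mu> * r \<le> h" using r0 by (simp add: norm_mult)
      then have "cmod \<mu> * r < 1 * r" using r by linarith
      then show ?thesis using r0 mult_less_cancel_right_pos by blast
    qed
    have "Re ((Y *\<^sub>v v) \<bullet>c v) \<le> N" unfolding N_def Y_def
      by (rule hermitian_quadratic_form_le_of_eigenvalues_less_1[OF hermitian_mat_smult[OF hZ] n
            small[unfolded Y_def] v])
    moreover have "(Y *\<^sub>v v) \<bullet>c v = complex_of_real (1 / r) * ((Z *\<^sub>v v) \<bullet>c v)"
      unfolding Y_def smult_mat_mult_mat_vec[OF Z v]
      by (rule smult_scalar_prod_distrib[of _ n]) (use Z v in auto)
    moreover have "Re (complex_of_real (1 / r) * z) = Re z / r" for z by simp
    ultimately have "q / r \<le> N" unfolding q_def by (simp only:)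
    then show ?thesis using r0 by (simp add: pos_divide_le_eq mult.commute)
  qed
  have "q \<le> h * N"
  proof (cases "N = 0")
    case True
    then show ?thesis using scaled[of "h + 1"] by simp
  next
    case False
    then have N: "0 < N" using N by simp
    have "q / N \<le> h"
      by (rule dense_ge) (simp add: pos_divide_le_eq[OF N] scaled mult.commute[of N])
    then show ?thesis using N by (simp add: pos_divide_le_eq)
  qed
  then show ?thesis unfolding q_def N_def .
qed

lemma hermitian_quadratic_form_shift_nonneg:
  assumes hZ: "hermitian_mat n Z" and n: "0 < n"
    and eigen_bound: "\<And>\<mu>. eigenvalue Z \<mu> \<Longrightarrow> cmod \<mu> \<le> r" and w: "w \<in> carrier_vec n"
  shows "0 \<le> ((complex_of_real r \<cdot>\<^sub>m 1\<^sub>m n - Z) *\<^sub>v w) \<bullet>c w"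
proof -
  have Z: "Z \<in> carrier_mat n n" using hZ by (rule hermitian_mat_carrier)
  have one: "complex_of_real r \<cdot>\<^sub>m 1\<^sub>m n \<in> carrier_mat n n" by simp
  have "(complex_of_real r \<cdot>\<^sub>m 1\<^sub>m n - Z) *\<^sub>v w = complex_of_real r \<cdot>\<^sub>v w - Z *\<^sub>v w"
    unfolding minus_mult_distrib_mat_vec[OF one Z w] smult_mat_mult_mat_vec[OF one_carrier_mat w]
    using w by simp
  then have "((complex_of_real r \<cdot>\<^sub>m 1\<^sub>m n - Z) *\<^sub>v w) \<bullet>c w
      = complex_of_real r * (w \<bullet>c w) - (Z *\<^sub>v w) \<bullet>c w"
    using minus_scalar_prod_distrib[of "complex_of_real r \<cdot>\<^sub>v w" n "Z *\<^sub>v w" "conjugate w"]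
      smult_scalar_prod_distrib[of w n "conjugate w" "complex_of_real r"] Z w
    by simp
  moreover have "Re ((Z *\<^sub>v w) \<bullet>c w) \<le> r * Re (w \<bullet>c w)"
    by (rule hermitian_quadratic_form_le_eigenvalue_bound[OF hZ n eigen_bound w])
  moreover have "Im (w \<bullet>c w) = 0" "Im ((Z *\<^sub>v w) \<bullet>c w) = 0"
    using cscalar_prod_self_real(1)[of w] hermitian_quadratic_form_real[OF hZ w]
    by (metis Im_complex_of_real)+
  ultimately show ?thesis using cscalar_prod_self_real(2)[of w] by (simp add: less_eq_complex_def)
qed

section \<open>Eigenvalues, the spread, and positivity\<close>

lemma eigenvalue_shift:
  fixes A :: "'a :: field mat"
  assumes A: "A \<in> carrier_mat n n" and e: "eigenvalue (A - a \<cdot>\<^sub>m 1\<^sub>m n) \<mu>"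
  shows "eigenvalue A (\<mu> + a)"
proof -
  have shifted: "A - a \<cdot>\<^sub>m 1\<^sub>m n \<in> carrier_mat n n" by (rule minus_carrier_mat) simp
  have "char_matrix (A - a \<cdot>\<^sub>m 1\<^sub>m n) \<mu> = char_matrix A (\<mu> + a)"
    using A by (intro eq_matI) (auto simp: char_matrix_def algebra_simps)
  then show ?thesis using e unfolding eigenvalue_char_matrix[OF A] eigenvalue_char_matrix[OF shifted] by simp
qed

lemma char_matrix_mult_self:
  fixes X :: "'a :: field mat"
  assumes X: "X \<in> carrier_mat n n"
  shows "char_matrix (X * X) (m * m) = char_matrix X m * char_matrix X (- m)"
proof -
  have one: "(c \<cdot>\<^sub>m 1\<^sub>m n) \<in> carrier_mat n n" for c :: 'a by simp
  have "char_matrix X m * char_matrix X (- m)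
      = (X * X + X * (m \<cdot>\<^sub>m 1\<^sub>m n)) + ((- m) \<cdot>\<^sub>m 1\<^sub>m n * X + (- m) \<cdot>\<^sub>m 1\<^sub>m n * (m \<cdot>\<^sub>m 1\<^sub>m n))"
    using X unfolding char_matrix_def
    by (simp add: add_mult_distrib_mat[OF X one add_carrier_mat[OF one]]
        mult_add_distrib_mat[OF X X one] mult_add_distrib_mat[OF one X one])
  also have "\<dots> = char_matrix (X * X) (m * m)"
    using X by (intro eq_matI) (auto simp: char_matrix_def)
  finally show ?thesis ..
qed

lemma eigenvalue_mult_self:
  fixes X :: "complex mat"
  assumes X: "X \<in> carrier_mat n n" and e: "eigenvalue (X * X) l"
  shows "\<exists>\<mu>. eigenvalue X \<mu> \<and> l = \<mu>\<^sup>2"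
proof -
  define m where "m = csqrt l"
  have l: "l = m * m" unfolding m_def by (metis power2_csqrt power2_eq_square)
  have "det (char_matrix X m) * det (char_matrix X (- m)) = 0"
    using e X unfolding eigenvalue_det[OF mult_carrier_mat[OF X X]] l char_matrix_mult_self[OF X]
    by (simp add: det_mult[of _ n])
  then have "eigenvalue X m \<or> eigenvalue X (- m)" by (simp add: eigenvalue_det[OF X])
  then show ?thesis using l by (auto simp: power2_eq_square)
qed

lemma eigenvalue_dist_le_spd:
  assumes A: "A \<in> carrier_mat n n" and "eigenvalue A l" "eigenvalue A m"
  shows "cmod (l - m) \<le> spd A"
proof -
  have "{cmod (l - m) | l m. eigenvalue A l \<and> eigenvalue A m}
      = (\<lambda>(l, m). cmod (l - m)) ` (spectrum A \<times> spectrum A)"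
    unfolding spectrum_def by auto
  then show ?thesis
    unfolding spd_def using assms card_finite_spectrum[OF A]
    by (auto simp: spectrum_def intro!: Max_ge)
qed

lemma hermitian_eigenvalues_in_ball:
  assumes hA: "hermitian_mat n A" and n: "0 < n"
  obtains c h where "0 \<le> h" "2 * h \<le> spd A"
    "\<And>l. eigenvalue A l \<Longrightarrow> cmod (l - complex_of_real c) \<le> h"
proof -
  have A: "A \<in> carrier_mat n n" using hA by (rule hermitian_mat_carrier)
  define E where "E = spectrum A"
  have E: "finite E" "E \<noteq> {}"
    using card_finite_spectrum[OF A] spectrum_non_empty[OF A n] unfolding E_def by auto
  have real: "l = complex_of_real (Re l)" if "l \<in> E" for l
    using eigenvalue_hermitian_real[OF hA] that unfolding E_def spectrum_def by (simp add: complex_eq_iff)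
  define lo where "lo = Min (Re ` E)"
  define hi where "hi = Max (Re ` E)"
  have range: "lo \<le> Re l" "Re l \<le> hi" if "l \<in> E" for l
    using E that unfolding lo_def hi_def by auto
  have "hi \<in> Re ` E" "lo \<in> Re ` E" using E unfolding lo_def hi_def by simp_all
  then obtain l1 l2 where l12: "l1 \<in> E" "l2 \<in> E" "Re l1 = hi" "Re l2 = lo" by auto
  have "hi - lo \<le> spd A"
  proof -
    have "cmod (l1 - l2) \<le> spd A"
      using eigenvalue_dist_le_spd[OF A] l12 unfolding E_def spectrum_def by simp
    moreover have "cmod (l1 - l2) = hi - lo"
      using real[OF l12(1)] real[OF l12(2)] range[OF l12(2)] l12
      by (metis abs_of_nonneg diff_ge_0_iff_ge norm_of_real of_real_diff)
    ultimately show ?thesis by simp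
  qed
  moreover have "cmod (l - complex_of_real ((lo + hi) / 2)) \<le> (hi - lo) / 2" if "eigenvalue A l" for l
  proof -
    have "l \<in> E" using that unfolding E_def spectrum_def by simp
    then have "l - complex_of_real ((lo + hi) / 2) = complex_of_real (Re l - (lo + hi) / 2)"
      by (subst real) simp_all
    then have "cmod (l - complex_of_real ((lo + hi) / 2)) = \<bar>Re l - (lo + hi) / 2\<bar>"
      by (simp only: norm_of_real)
    also have "\<dots> \<le> (hi - lo) / 2" using range[OF \<open>l \<in> E\<close>] by (simp add: abs_le_iff field_simps)
    finally show ?thesis .
  qed
  moreover have "0 \<le> (hi - lo) / 2" using range(2)[OF l12(2)] l12(4) by simp
  ultimately show ?thesis using that[of "(hi - lo) / 2" "(lo + hi) / 2"] by simp
qed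

lemma sum_cnj_mult_eq_cscalar_prod:
  "w \<in> carrier_vec n \<Longrightarrow> v \<in> carrier_vec n \<Longrightarrow> (\<Sum>i<n. cnj (v $ i) * w $ i) = w \<bullet>c v"
  by (simp add: scalar_prod_def lessThan_atLeast0 mult.commute)

lemma psd_mat_poly_mat_sandwich:
  assumes hA: "hermitian_mat n A"
    and pos: "\<And>w. w \<in> carrier_vec n \<Longrightarrow> 0 \<le> (poly_mat A x *\<^sub>v w) \<bullet>c w"
  shows "psd_mat n (poly_mat A (q * x * q))"
  unfolding psd_mat_def
proof (intro conjI ballI)
  have A: "A \<in> carrier_mat n n" using hA by (rule hermitian_mat_carrier)
  show "hermitian_mat n (poly_mat A (q * x * q))" by (rule hermitian_poly_mat[OF hA])
  fix v :: "complex vec" assume v: "v \<in> carrier_vec n"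
  let ?Q = "poly_mat A q" and ?X = "poly_mat A x"
  have Q: "?Q \<in> carrier_mat n n" and X: "?X \<in> carrier_mat n n" by (simp_all add: A)
  have Qv: "?Q *\<^sub>v v \<in> carrier_vec n" and XQv: "?X *\<^sub>v (?Q *\<^sub>v v) \<in> carrier_vec n"
    using Q X v by simp_all
  have "poly_mat A (q * x * q) *\<^sub>v v = (?Q * ?X) *\<^sub>v (?Q *\<^sub>v v)"
    unfolding poly_mat_mult[OF A] by (rule assoc_mult_mat_vec[OF mult_carrier_mat[OF Q X] Q v])
  also have "\<dots> = ?Q *\<^sub>v (?X *\<^sub>v (?Q *\<^sub>v v))"
    by (rule assoc_mult_mat_vec[OF Q X Qv])
  finally have "(\<Sum>i<n. cnj (v $ i) * (poly_mat A (q * x * q) *\<^sub>v v) $ i)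
      = (?Q *\<^sub>v (?X *\<^sub>v (?Q *\<^sub>v v))) \<bullet>c v"
    using sum_cnj_mult_eq_cscalar_prod[OF mult_mat_vec_carrier[OF Q XQv] v] by simp
  also have "\<dots> = (?X *\<^sub>v (?Q *\<^sub>v v)) \<bullet>c (?Q *\<^sub>v v)"
    by (rule hermitian_mat_cscalar_prod_swap[OF hermitian_poly_mat[OF hA] XQv v])
  finally show "0 \<le> (\<Sum>i<n. cnj (v $ i) * (poly_mat A (q * x * q) *\<^sub>v v) $ i)"
    using pos[OF Qv] by simp
qed

lemma hermitian_spread_quadratic_form_nonneg:
  assumes hA: "hermitian_mat n A" and n: "0 < n"
    and ball: "\<And>l. eigenvalue A l \<Longrightarrow> cmod (l - complex_of_real c) \<le> h"
    and w: "w \<in> carrier_vec n"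
  shows "0 \<le> (poly_mat A ([:h\<^sup>2:] - [:- c, 1:]\<^sup>2) *\<^sub>v w) \<bullet>c w"
proof -
  have A: "A \<in> carrier_mat n n" using hA by (rule hermitian_mat_carrier)
  define U where "U = poly_mat A [:- c, 1:]"
  have U: "U \<in> carrier_mat n n" "U = A - complex_of_real c \<cdot>\<^sub>m 1\<^sub>m n"
  proof -
    have "[:- c, 1:] = [:0, 1:] - [:c:]" by simp
    then show "U = A - complex_of_real c \<cdot>\<^sub>m 1\<^sub>m n"
      unfolding U_def by (simp only: poly_mat_diff[OF A] poly_mat_X[OF A] poly_mat_const[OF A])
  qed (simp add: U_def A)
  have square: "poly_mat A ([:- c, 1:]\<^sup>2) = U * U"
    unfolding U_def power2_eq_square by (rule poly_mat_mult[OF A])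
  have "cmod l \<le> h\<^sup>2" if l: "eigenvalue (U * U) l" for l
  proof -
    obtain \<mu> where \<mu>: "eigenvalue U \<mu>" "l = \<mu>\<^sup>2"
      using eigenvalue_mult_self[OF U(1) l] by blast
    have "eigenvalue A (\<mu> + complex_of_real c)" using eigenvalue_shift[OF A] \<mu>(1) unfolding U(2) .
    then have "cmod (\<mu> + complex_of_real c - complex_of_real c) \<le> h" by (rule ball)
    then show ?thesis unfolding \<mu>(2) norm_power by (intro power_mono) auto
  qed
  then show ?thesis
    using hermitian_quadratic_form_shift_nonneg[OF hermitian_poly_mat[OF hA] n _ w, of "[:- c, 1:]\<^sup>2" "h\<^sup>2"]
    by (simp add: square poly_mat_diff[OF A] poly_mat_const[OF A])
qed

section \<open>Moments of a positive unital functional\<close>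

text \<open>The two bounds are the maxima of \<open>(h\<^sup>2 - s\<^sup>2) (h\<^sup>2 + 3 s\<^sup>2)\<close> over \<open>s\<close> (at \<open>3 s\<^sup>2 = h\<^sup>2\<close>) and of
  \<open>n\<^sup>2 (h\<^sup>2 - n)\<close> over \<open>n \<ge> 0\<close> (at \<open>3 n = 2 h\<^sup>2\<close>), where \<open>n = m\<^sub>2 + s\<^sup>2\<close> is the second moment about \<open>c\<close>.\<close>

lemma central_moment_bounds:
  fixes h s m2 m3 m4 :: real
  assumes m2: "0 \<le> m2"
    and second: "m2 + s\<^sup>2 \<le> h\<^sup>2"
    and fourth: "m4 + 4 * s * m3 + 6 * s\<^sup>2 * m2 + s ^ 4 \<le> h\<^sup>2 * (m2 + s\<^sup>2)"
    and mixed: "m4 - 2 * s\<^sup>2 * m2 + s ^ 4 \<le> h\<^sup>2 * (m2 + s\<^sup>2)"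
  shows "m4 \<le> (2 * h) ^ 4 / 12" and "m2 * m4 - m2 ^ 3 - m3\<^sup>2 \<le> (2 * h) ^ 6 / 432"
proof -
  have "m4 \<le> (h\<^sup>2 + 2 * s\<^sup>2) * m2 + h\<^sup>2 * s\<^sup>2 - s ^ 4"
    using mixed by (simp add: algebra_simps)
  also have "\<dots> \<le> (h\<^sup>2 + 2 * s\<^sup>2) * (h\<^sup>2 - s\<^sup>2) + h\<^sup>2 * s\<^sup>2 - s ^ 4"
    using second by (intro diff_right_mono add_right_mono mult_left_mono) auto
  also have "\<dots> = (2 * h) ^ 4 / 12 - (h\<^sup>2 - 3 * s\<^sup>2)\<^sup>2 / 3"
    by (simp add: field_simps power2_eq_square power4_eq_xxxx)
  also have "\<dots> \<le> (2 * h) ^ 4 / 12" by simp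
  finally show "m4 \<le> (2 * h) ^ 4 / 12" .
next
  define n2 where "n2 = m2 + s\<^sup>2"
  have n2: "0 \<le> n2" "m2 \<le> n2" using m2 unfolding n2_def by simp_all
  have "m2 * m4 - m2 ^ 3 - m3\<^sup>2
      = m2 * (m4 + 4 * s * m3 + 6 * s\<^sup>2 * m2 + s ^ 4 - n2\<^sup>2) - (2 * s * m2 + m3)\<^sup>2"
    unfolding n2_def by (simp add: algebra_simps power2_eq_square power3_eq_cube power4_eq_xxxx)
  also have "\<dots> \<le> m2 * (m4 + 4 * s * m3 + 6 * s\<^sup>2 * m2 + s ^ 4 - n2\<^sup>2)" by simp
  also have "\<dots> \<le> m2 * (h\<^sup>2 * n2 - n2\<^sup>2)"
    using fourth m2 unfolding n2_def[symmetric] by (intro mult_left_mono) auto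
  also have "\<dots> = m2 * (n2 * (h\<^sup>2 - n2))" by (simp add: algebra_simps power2_eq_square)
  also have "\<dots> \<le> n2 * (n2 * (h\<^sup>2 - n2))"
    using second n2 unfolding n2_def[symmetric] by (intro mult_right_mono) auto
  also have "\<dots> = (2 * h) ^ 6 / 432 - (n2 - 2 * h\<^sup>2 / 3)\<^sup>2 * (n2 + h\<^sup>2 / 3)"
    by (simp add: field_simps power2_eq_square power3_eq_cube power4_eq_xxxx numeral_eq_Suc)
  also have "\<dots> \<le> (2 * h) ^ 6 / 432" using n2 by simp
  finally show "m2 * m4 - m2 ^ 3 - m3\<^sup>2 \<le> (2 * h) ^ 6 / 432" .
qed

lemma pos_unital_functional_dim_pos:
  assumes "pos_unital_functional n \<phi>" shows "0 < n"
proof (rule ccontr)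
  assume "\<not> 0 < n"
  then have "n = 0" by simp
  moreover have "(1\<^sub>m 0 :: complex mat) + 1\<^sub>m 0 = 1\<^sub>m 0" by (rule eq_matI) auto
  ultimately have "\<phi> (1\<^sub>m n) = \<phi> (1\<^sub>m n) + \<phi> (1\<^sub>m n)"
    using assms unfolding pos_unital_functional_def by (metis one_carrier_mat)
  then show False using assms unfolding pos_unital_functional_def by simp
qed

locale hermitian_state =
  fixes n :: nat and \<phi> :: "complex mat \<Rightarrow> complex" and A :: "complex mat"
  assumes state: "pos_unital_functional n \<phi>" and hermitian: "hermitian_mat n A"
begin

lemma A_carrier: "A \<in> carrier_mat n n"
  using hermitian by (rule hermitian_mat_carrier)

lemma dim_pos: "0 < n"
  using state by (rule pos_unital_functional_dim_pos)

lemma phi_poly_mat_add: "\<phi> (poly_mat A (p + q)) = \<phi> (poly_mat A p) + \<phi> (poly_mat A q)"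
  using state A_carrier unfolding pos_unital_functional_def poly_mat_add[OF A_carrier] by simp

lemma phi_poly_mat_smult: "\<phi> (poly_mat A (Polynomial.smult c p)) = complex_of_real c * \<phi> (poly_mat A p)"
  using state A_carrier unfolding pos_unital_functional_def poly_mat_smult[OF A_carrier] by simp

lemma phi_poly_mat_diff: "\<phi> (poly_mat A (p - q)) = \<phi> (poly_mat A p) - \<phi> (poly_mat A q)"
  using phi_poly_mat_add[of p "Polynomial.smult (-1) q"] phi_poly_mat_smult[of "-1" q] by simp

lemma phi_poly_mat_const: "\<phi> (poly_mat A [:c:]) = complex_of_real c"
  using state unfolding pos_unital_functional_def poly_mat_const[OF A_carrier] by simp

lemma phi_poly_mat_sandwich_nonneg:
  assumes "\<And>w. w \<in> carrier_vec n \<Longrightarrow> 0 \<le> (poly_mat A x *\<^sub>v w) \<bullet>c w"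
  shows "0 \<le> \<phi> (poly_mat A (q * x * q))"
  using state psd_mat_poly_mat_sandwich[OF hermitian assms] unfolding pos_unital_functional_def by blast

lemma phi_poly_mat_square_nonneg: "0 \<le> \<phi> (poly_mat A (q * q))"
  using phi_poly_mat_sandwich_nonneg[of 1 q] conjugate_square_ge_0_vec
  by (simp add: poly_mat_one[OF A_carrier]) blast

lemma phi_poly_mat_real: "\<phi> (poly_mat A p) = complex_of_real (Re (\<phi> (poly_mat A p)))"
proof -
  \<comment> \<open>polarization: \<open>4 p\<close> is a difference of two squares, on which \<open>\<phi>\<close> is real\<close>
  have "Polynomial.smult 4 p = (p + 1) * (p + 1) - (p - 1) * (p - 1)"
    by (simp add: algebra_simps numeral_mult_conv_smult[symmetric])
  then have "4 * \<phi> (poly_mat A p) = \<phi> (poly_mat A ((p + 1) * (p + 1))) - \<phi> (poly_mat A ((p - 1) * (p - 1)))"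
    by (metis phi_poly_mat_diff phi_poly_mat_smult of_real_numeral)
  then have "Im (4 * \<phi> (poly_mat A p))
      = Im (\<phi> (poly_mat A ((p + 1) * (p + 1))) - \<phi> (poly_mat A ((p - 1) * (p - 1))))"
    by (rule arg_cong)
  then have "Im (\<phi> (poly_mat A p)) = 0"
    using phi_poly_mat_square_nonneg[of "p + 1"] phi_poly_mat_square_nonneg[of "p - 1"]
    by (auto simp: less_eq_complex_def)
  then show ?thesis by (simp add: complex_eq_iff)
qed

definition moment :: "real poly \<Rightarrow> real" where
  "moment p = Re (\<phi> (poly_mat A p))"

lemma phi_poly_mat_eq_moment: "\<phi> (poly_mat A p) = complex_of_real (moment p)"
  unfolding moment_def by (rule phi_poly_mat_real)

lemma moment_add: "moment (p + q) = moment p + moment q"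
  by (simp add: moment_def phi_poly_mat_add)

lemma moment_diff: "moment (p - q) = moment p - moment q"
  by (simp add: moment_def phi_poly_mat_diff)

lemma moment_smult: "moment (Polynomial.smult c p) = c * moment p"
  by (simp add: moment_def phi_poly_mat_smult)

lemma moment_const: "moment [:c:] = c"
  by (simp add: moment_def phi_poly_mat_const)

lemma moment_sandwich_nonneg:
  assumes "\<And>w. w \<in> carrier_vec n \<Longrightarrow> 0 \<le> (poly_mat A x *\<^sub>v w) \<bullet>c w"
  shows "0 \<le> moment (q * x * q)"
  using phi_poly_mat_sandwich_nonneg[OF assms] by (simp add: moment_def less_eq_complex_def)

lemma moment_square_nonneg: "0 \<le> moment (q * q)"
  using phi_poly_mat_square_nonneg by (simp add: moment_def less_eq_complex_def)

text \<open>With \<open>U = y + s\<close>, the positive element \<open>h\<^sup>2 - U\<^sup>2\<close> is sandwiched between \<open>1\<close>, \<open>U\<close> and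
  \<open>U - 2 s = y - s\<close>; the last choice makes the odd powers of \<open>y\<close> other than \<open>y\<close> itself cancel.\<close>

lemma shifted_moment_constraints:
  assumes pos: "\<And>w. w \<in> carrier_vec n \<Longrightarrow> 0 \<le> (poly_mat A ([:h\<^sup>2:] - (y + [:s:])\<^sup>2) *\<^sub>v w) \<bullet>c w"
    and centered: "moment y = 0"
  shows "moment (y\<^sup>2) + s\<^sup>2 \<le> h\<^sup>2"
    and "moment (y ^ 4) + 4 * s * moment (y ^ 3) + 6 * s\<^sup>2 * moment (y\<^sup>2) + s ^ 4
      \<le> h\<^sup>2 * (moment (y\<^sup>2) + s\<^sup>2)"
    and "moment (y ^ 4) - 2 * s\<^sup>2 * moment (y\<^sup>2) + s ^ 4 \<le> h\<^sup>2 * (moment (y\<^sup>2) + s\<^sup>2)"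
proof -
  let ?x = "[:h\<^sup>2:] - (y + [:s:])\<^sup>2"
  have one: "1 * ?x * 1 = [:h\<^sup>2 - s\<^sup>2:] - y\<^sup>2 - Polynomial.smult (2 * s) y"
    by (rule poly_eq_poly_eq_iff[THEN iffD1]) (simp add: fun_eq_iff algebra_simps power2_eq_square)
  show "moment (y\<^sup>2) + s\<^sup>2 \<le> h\<^sup>2"
    using moment_sandwich_nonneg[OF pos, of 1]
    unfolding one moment_diff moment_smult moment_const centered by simp
  have plus: "(y + [:s:]) * ?x * (y + [:s:]) = Polynomial.smult (h\<^sup>2 - 6 * s\<^sup>2) (y\<^sup>2)
      + Polynomial.smult (2 * h\<^sup>2 * s - 4 * s ^ 3) y + [:h\<^sup>2 * s\<^sup>2 - s ^ 4:]
      - y ^ 4 - Polynomial.smult (4 * s) (y ^ 3)"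
    by (rule poly_eq_poly_eq_iff[THEN iffD1])
      (simp add: fun_eq_iff algebra_simps power2_eq_square power3_eq_cube power4_eq_xxxx)
  show "moment (y ^ 4) + 4 * s * moment (y ^ 3) + 6 * s\<^sup>2 * moment (y\<^sup>2) + s ^ 4
      \<le> h\<^sup>2 * (moment (y\<^sup>2) + s\<^sup>2)"
    using moment_sandwich_nonneg[OF pos, of "y + [:s:]"]
    unfolding plus moment_add moment_diff moment_smult moment_const centered by (simp add: algebra_simps)
  have minus: "(y - [:s:]) * ?x * (y - [:s:]) = Polynomial.smult (h\<^sup>2 + 2 * s\<^sup>2) (y\<^sup>2)
      - Polynomial.smult (2 * h\<^sup>2 * s) y + [:h\<^sup>2 * s\<^sup>2 - s ^ 4:] - y ^ 4"
    by (rule poly_eq_poly_eq_iff[THEN iffD1])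
      (simp add: fun_eq_iff algebra_simps power2_eq_square power3_eq_cube power4_eq_xxxx)
  show "moment (y ^ 4) - 2 * s\<^sup>2 * moment (y\<^sup>2) + s ^ 4 \<le> h\<^sup>2 * (moment (y\<^sup>2) + s\<^sup>2)"
    using moment_sandwich_nonneg[OF pos, of "y - [:s:]"]
    unfolding minus moment_add moment_diff moment_smult moment_const centered by (simp add: algebra_simps)
qed


lemma central_moment_bounds_spd:
  defines "y \<equiv> [:- moment [:0, 1:], 1:]"
  shows "moment (y ^ 4) \<le> spd A ^ 4 / 12"
    and "moment (y\<^sup>2) * moment (y ^ 4) - moment (y\<^sup>2) ^ 3 - moment (y ^ 3) ^ 2 \<le> spd A ^ 6 / 432"
proof -
  obtain c h where h: "0 \<le> h" "2 * h \<le> spd A"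
    and ball: "\<And>l. eigenvalue A l \<Longrightarrow> cmod (l - complex_of_real c) \<le> h"
    using hermitian_eigenvalues_in_ball[OF hermitian dim_pos] by blast
  define s where "s = moment [:0, 1:] - c"
  have "y + [:s:] = [:- c, 1:]" unfolding y_def s_def by simp
  then have pos: "0 \<le> (poly_mat A ([:h\<^sup>2:] - (y + [:s:])\<^sup>2) *\<^sub>v w) \<bullet>c w" if "w \<in> carrier_vec n" for w
    using hermitian_spread_quadratic_form_nonneg[OF hermitian dim_pos ball that] by simp
  have "y = [:0, 1:] - [:moment [:0, 1:]:]" unfolding y_def by simp
  then have centered: "moment y = 0" by (simp only: moment_diff moment_const diff_self)
  have "0 \<le> moment (y\<^sup>2)" using moment_square_nonneg[of y] by (simp add: power2_eq_square)
  note bounds = central_moment_bounds[OF this shifted_moment_constraints[OF pos centered]]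
  have "(2 * h) ^ 4 \<le> spd A ^ 4" "(2 * h) ^ 6 \<le> spd A ^ 6"
    using h by (intro power_mono; simp)+
  then show "moment (y ^ 4) \<le> spd A ^ 4 / 12"
    and "moment (y\<^sup>2) * moment (y ^ 4) - moment (y\<^sup>2) ^ 3 - moment (y ^ 3) ^ 2 \<le> spd A ^ 6 / 432"
    using bounds by simp_all
qed

end

theorem theorem3p1:
  fixes n :: nat and \<phi> :: "complex mat \<Rightarrow> complex" and A :: "complex mat"
  assumes "pos_unital_functional n \<phi>"
    and "hermitian_mat n A"
  defines "B \<equiv> A - \<phi> A \<cdot>\<^sub>m 1\<^sub>m n"
  shows "\<phi> (B ^\<^sub>m 4) \<le> complex_of_real (spd A ^ 4 / 12) \<and>
         \<phi> (B ^\<^sub>m 2) * \<phi> (B ^\<^sub>m 4) - \<phi> (B ^\<^sub>m 2) ^ 3 - \<phi> (B ^\<^sub>m 3) ^ 2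
           \<le> complex_of_real (spd A ^ 6 / 432)"
proof -
  interpret hermitian_state n \<phi> A using assms(1,2) by unfold_locales
  define y where "y = [:- moment [:0, 1:], 1:]"
  have "y = [:0, 1:] - [:moment [:0, 1:]:]" unfolding y_def by simp
  moreover have "\<phi> A = complex_of_real (moment [:0, 1:])"
    using phi_poly_mat_eq_moment[of "[:0, 1:]"] by (simp add: poly_mat_X[OF A_carrier])
  ultimately have "B = poly_mat A y"
    unfolding B_def by (simp only: poly_mat_diff[OF A_carrier] poly_mat_X[OF A_carrier] poly_mat_const[OF A_carrier])
  then have "\<phi> (B ^\<^sub>m k) = complex_of_real (moment (y ^ k))" for k
    by (simp add: poly_mat_power[OF A_carrier, symmetric] phi_poly_mat_eq_moment)
  then show ?thesis
    using central_moment_bounds_spd unfolding y_def[symmetric] by (simp add: less_eq_complex_def)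
qed

end
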